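(* Let $\mathfrak R=(\mathcal B,\mathcal S,\pi)$ be a return risk measurement regime such that $\mathcal S$ is a cone and $\pi$ is positively homogeneous, and let $\mathcal S_1=\{Z\in\mathcal S:\pi(Z)=1\}$. Then for all $X\in\mathcal C$, $$\eta_{\mathfrak R}(X)=\inf\{\lambda>0: X/\lambda\in\mathcal B\cdot\mathcal S_1\}.$$ Moreover, $\mathcal B\cdot\mathcal S_1$ is monotone in the sense that for all $X\in\mathcal B\cdot\mathcal S_1$ and all $Y\in\mathcal C$ with $Y\le X$ a.s., we have $Y\in\mathcal B\cdot\mathcal S_1$.
   Context: Let $(\Omega,\mathcal F,P)$ be a probability space, $L^0$ the space of real random variables with the a.s. order, $L^0_{++}=\{X\in L^0:X>0\text{ a.s.}\}$. For $\mathcal A,\mathcal D\subset L^0_{++}$ write $\mathcal A\cdot\mathcal D=\{AD:A\in\mathcal A,D\in\mathcal D\}$ and $\frac{\mathcal A}{\mathcal D}=\{AD^{-1}:A\in\mathcal A,D\in\mathcal D\}$. Setting: nonempty sets $\mathcal C,\mathcal S,\mathcal K\subset L^0_{++}$ (model set, security set, set of relative losses) with $\frac{\mathcal C}{\mathcal S}\subset\mathcal K$; a pricing map $\pi\colon\mathcal S\to(0,\infty)$; a relative acceptance set $\mathcal B$, i.e. a nonempty proper subset of $\mathcal K$ such that $X\in\mathcal B$, $Y\in\mathcal K$, $Y\le X$ imply $Y\in\mathcal B$. $\mathfrak R=(\mathcal B,\mathcal S,\pi)$ is a return risk measurement regime, and $\eta_{\mathfrak R}(X)=\inf\{\pi(Z):Z\in\mathcal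 S,\ X/Z\in\mathcal B\}$, $X\in\mathcal C$ ($\inf\emptyset=\infty$), is the MARRM. A set $\mathcal A$ is a cone if $\lambda\mathcal A\subset\mathcal A$ for all $\lambda>0$; $\pi$ is positively homogeneous if $\pi(\lambda Z)=\lambda\pi(Z)$ for $\lambda>0$, $Z\in\mathcal S$. *)

theory Defs
  imports "HOL-Probability.Probability"
begin

text \<open>Elements of L^0 are represented by measurable real functions on the sample
space; equalities and inequalities between random variables are understood almost surely.\<close>

definition L0pp :: "'a measure \<Rightarrow> ('a \<Rightarrow> real) set" where
  "L0pp M = {X \<in> borel_measurable M. AE \<omega> in M. X \<omega> > 0}"

definition setprod :: "'a measure \<Rightarrow> ('a \<Rightarrow> real) set \<Rightarrow> ('a \<Rightarrow> real) set \<Rightarrow> ('a \<Rightarrow> real) set" where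
  "setprod M A D = {W \<in> borel_measurable M. \<exists>a\<in>A. \<exists>d\<in>D. AE \<omega> in M. W \<omega> = a \<omega> * d \<omega>}"

definition setquot :: "'a measure \<Rightarrow> ('a \<Rightarrow> real) set \<Rightarrow> ('a \<Rightarrow> real) set \<Rightarrow> ('a \<Rightarrow> real) set" where
  "setquot M A D = {W \<in> borel_measurable M. \<exists>a\<in>A. \<exists>d\<in>D. AE \<omega> in M. W \<omega> = a \<omega> / d \<omega>}"

definition rel_acceptance_set :: "'a measure \<Rightarrow> ('a \<Rightarrow> real) set \<Rightarrow> ('a \<Rightarrow> real) set \<Rightarrow> bool" where
  "rel_acceptance_set M K B \<longleftrightarrow> B \<noteq> {} \<and> B \<subset> K \<and>
     (\<forall>X\<in>B. \<forall>Y\<in>K. (AE \<omega> in M. Y \<omega> \<le> X \<omega>) \<longrightarrow> Y \<in> B)"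

definition is_cone :: "('a \<Rightarrow> real) set \<Rightarrow> bool" where
  "is_cone A \<longleftrightarrow> (\<forall>l::real. l > 0 \<longrightarrow> (\<forall>Z\<in>A. (\<lambda>\<omega>. l * Z \<omega>) \<in> A))"

definition pos_homogeneous :: "('a \<Rightarrow> real) set \<Rightarrow> (('a \<Rightarrow> real) \<Rightarrow> real) \<Rightarrow> bool" where
  "pos_homogeneous S \<pi> \<longleftrightarrow> (\<forall>l::real. l > 0 \<longrightarrow> (\<forall>Z\<in>S. \<pi> (\<lambda>\<omega>. l * Z \<omega>) = l * \<pi> Z))"

text \<open>MARRM, with values in the extended reals (inf of the empty set is infinity).\<close>
definition MARRM :: "('a \<Rightarrow> real) set \<Rightarrow> ('a \<Rightarrow> real) set \<Rightarrow> (('a \<Rightarrow> real) \<Rightarrow> real)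
    \<Rightarrow> ('a \<Rightarrow> real) \<Rightarrow> ereal" where
  "MARRM B S \<pi> X = Inf {ereal (\<pi> Z) | Z. Z \<in> S \<and> (\<lambda>\<omega>. X \<omega> / Z \<omega>) \<in> B}"

end

theory Submission
  imports Defs
begin

text \<open>Rescaling a security Z to Z/\<pi>(Z), of unit price, turns an acceptable return
X/Z into the price-normalised position X/\<pi>(Z) = (X/Z) \<cdot> (Z/\<pi>(Z)); conversely
X/l = b \<cdot> Z with \<pi>(Z) = 1 gives the security lZ of price l with X/(lZ) = b a.s.
Hence both infima range over the same set of prices. The set B \<cdot> S1 of acceptable
returns times unit-price securities is monotone because Y \<le> bZ forces Y/Z \<le> b,
so Y/Z is acceptable and Y = (Y/Z) \<cdot> Z.\<close>

lemma rel_acceptance_set_downward: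
  assumes "rel_acceptance_set M K B" "X \<in> B" "Y \<in> K" "AE \<omega> in M. Y \<omega> \<le> X \<omega>"
  shows "Y \<in> B"
  using assms unfolding rel_acceptance_set_def by blast

lemma setprod_memI_quot:
  assumes "W \<in> borel_measurable M" "d \<in> D" "AE \<omega> in M. d \<omega> > 0"
    and "(\<lambda>\<omega>. W \<omega> / d \<omega>) \<in> B"
  shows "W \<in> setprod M B D"
proof -
  have "AE \<omega> in M. W \<omega> = W \<omega> / d \<omega> * d \<omega>"
    using assms(3) by eventually_elim auto
  then show ?thesis
    unfolding setprod_def
    using assms(1,2,4) by (intro CollectI conjI bexI[of _ "\<lambda>\<omega>. W \<omega> / d \<omega>"] bexI[of _ d])
qed

lemma setprod_le_obtains_acceptable_quot:
  assumes "rel_acceptance_set M K B" "\<forall>d\<in>D. AE \<omega> in M. d \<omega> > 0"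
    and "X \<in> setprod M B D" "\<forall>d\<in>D. (\<lambda>\<omega>. Y \<omega> / d \<omega>) \<in> K"
    and "AE \<omega> in M. Y \<omega> \<le> X \<omega>"
  obtains d where "d \<in> D" "(\<lambda>\<omega>. Y \<omega> / d \<omega>) \<in> B"
proof -
  obtain b d where b: "b \<in> B" and d: "d \<in> D" and X: "AE \<omega> in M. X \<omega> = b \<omega> * d \<omega>"
    using assms(3) unfolding setprod_def by blast
  have "AE \<omega> in M. Y \<omega> / d \<omega> \<le> b \<omega>"
    using X assms(5) bspec[OF assms(2) d] by eventually_elim (auto simp: field_simps)
  with rel_acceptance_set_downward[OF assms(1) b] d assms(4) that show thesis
    by blast
qed

lemma setprod_downward_closed:
  assumes "rel_acceptance_set M K B" "\<forall>d\<in>D. AE \<omega> in M. d \<omega> > 0"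
    and "X \<in> setprod M B D" "Y \<in> borel_measurable M" "\<forall>d\<in>D. (\<lambda>\<omega>. Y \<omega> / d \<omega>) \<in> K"
    and "AE \<omega> in M. Y \<omega> \<le> X \<omega>"
  shows "Y \<in> setprod M B D"
proof -
  obtain d where "d \<in> D" "(\<lambda>\<omega>. Y \<omega> / d \<omega>) \<in> B"
    using setprod_le_obtains_acceptable_quot[OF assms(1-3,5-6)] .
  with assms(2,4) show ?thesis
    by (blast intro: setprod_memI_quot)
qed

lemma acceptable_prices_eq_scaling_levels:
  assumes B: "rel_acceptance_set M K B"
    and S_pos: "\<forall>Z\<in>S. AE \<omega> in M. Z \<omega> > 0" and \<pi>_pos: "\<forall>Z\<in>S. \<pi> Z > 0"
    and cone: "is_cone S" and hom: "pos_homogeneous S \<pi>"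
    and X: "X \<in> borel_measurable M" and XK: "\<forall>Z\<in>S. (\<lambda>\<omega>. X \<omega> / Z \<omega>) \<in> K"
  shows "{\<pi> Z | Z. Z \<in> S \<and> (\<lambda>\<omega>. X \<omega> / Z \<omega>) \<in> B}
       = {l | l. l > 0 \<and> (\<lambda>\<omega>. X \<omega> / l) \<in> setprod M B {Z \<in> S. \<pi> Z = 1}}"
    (is "?prices = ?levels")
proof (intro equalityI subsetI)
  fix l assume "l \<in> ?prices"
  then obtain Z where Z: "Z \<in> S" "(\<lambda>\<omega>. X \<omega> / Z \<omega>) \<in> B" and l: "l = \<pi> Z"
    by blast
  have "l > 0" using \<pi>_pos Z l by auto
  define d where "d = (\<lambda>\<omega>. (1 / l) * Z \<omega>)"
  have "d \<in> S" "\<pi> d = 1"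
    using cone hom \<open>l > 0\<close> Z(1) l unfolding d_def is_cone_def pos_homogeneous_def
    by (auto dest!: spec[of _ "1 / l"])
  moreover have "AE \<omega> in M. d \<omega> > 0"
    unfolding d_def using bspec[OF S_pos Z(1)] by eventually_elim (use \<open>l > 0\<close> in simp)
  moreover have "(\<lambda>\<omega>. (X \<omega> / l) / d \<omega>) = (\<lambda>\<omega>. X \<omega> / Z \<omega>)"
    using \<open>l > 0\<close> by (simp add: d_def)
  ultimately have "(\<lambda>\<omega>. X \<omega> / l) \<in> setprod M B {Z \<in> S. \<pi> Z = 1}"
    using Z(2) X by (intro setprod_memI_quot[where d = d]) auto
  with \<open>l > 0\<close> show "l \<in> ?levels" by blast
next
  fix l assume "l \<in> ?levels"
  then have l: "l > 0" and Xl: "(\<lambda>\<omega>. X \<omega> / l) \<in> setprod M B {Z \<in> S. \<pi> Z = 1}"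
    by auto
  have quot: "(\<lambda>\<omega>. X \<omega> / l / d \<omega>) = (\<lambda>\<omega>. X \<omega> / (l * d \<omega>))" for d
    by simp
  have "\<forall>d\<in>{Z \<in> S. \<pi> Z = 1}. (\<lambda>\<omega>. X \<omega> / l / d \<omega>) \<in> K"
    using cone l XK unfolding quot is_cone_def by auto
  moreover have "\<forall>d\<in>{Z \<in> S. \<pi> Z = 1}. AE \<omega> in M. d \<omega> > 0"
    using S_pos by blast
  ultimately obtain d where "d \<in> {Z \<in> S. \<pi> Z = 1}" "(\<lambda>\<omega>. X \<omega> / l / d \<omega>) \<in> B"
    using setprod_le_obtains_acceptable_quot[OF B _ Xl _ AE_I2[OF order_refl]] by blast
  then have d: "d \<in> S" "\<pi> d = 1" and dB: "(\<lambda>\<omega>. X \<omega> / (l * d \<omega>)) \<in> B"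
    unfolding quot by auto
  have "(\<lambda>\<omega>. l * d \<omega>) \<in> S" "\<pi> (\<lambda>\<omega>. l * d \<omega>) = l"
    using cone hom l d unfolding is_cone_def pos_homogeneous_def by auto
  with dB show "l \<in> ?prices" by force
qed

theorem mainTheorem2:
  fixes M :: "'a measure" and C S K B :: "('a \<Rightarrow> real) set"
    and \<pi> :: "('a \<Rightarrow> real) \<Rightarrow> real"
  assumes "prob_space M"
    and "C \<noteq> {}" "S \<noteq> {}" "K \<noteq> {}"
    and "C \<subseteq> L0pp M" "S \<subseteq> L0pp M" "K \<subseteq> L0pp M"
    and "setquot M C S \<subseteq> K"
    and "\<forall>Z\<in>S. \<pi> Z > 0"
    and "rel_acceptance_set M K B"
    and "is_cone S"
    and "pos_homogeneous S \<pi>"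
  shows "(\<forall>X\<in>C. MARRM B S \<pi> X =
            Inf {ereal l | l. l > 0 \<and> (\<lambda>\<omega>. X \<omega> / l) \<in> setprod M B {Z \<in> S. \<pi> Z = 1}})
       \<and> (\<forall>X\<in>setprod M B {Z \<in> S. \<pi> Z = 1}. \<forall>Y\<in>C.
            (AE \<omega> in M. Y \<omega> \<le> X \<omega>) \<longrightarrow> Y \<in> setprod M B {Z \<in> S. \<pi> Z = 1})"
proof -
  have S_pos: "\<forall>Z\<in>S. AE \<omega> in M. Z \<omega> > 0"
    and S_meas: "\<forall>Z\<in>S. Z \<in> borel_measurable M"
    using assms(6) by (auto simp: L0pp_def)
  have C_meas: "X \<in> borel_measurable M" if "X \<in> C" for X
    using assms(5) that by (auto simp: L0pp_def)
  have CS_K: "\<forall>Z\<in>S. (\<lambda>\<omega>. X \<omega> / Z \<omega>) \<in> K" if "X \<in> C" for X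
  proof
    fix Z assume "Z \<in> S"
    with that C_meas[OF that] have "(\<lambda>\<omega>. X \<omega> / Z \<omega>) \<in> setquot M C S"
      unfolding setquot_def using S_meas by (auto intro!: borel_measurable_divide)
    with assms(8) show "(\<lambda>\<omega>. X \<omega> / Z \<omega>) \<in> K" by blast
  qed
  have "MARRM B S \<pi> X =
          Inf {ereal l | l. l > 0 \<and> (\<lambda>\<omega>. X \<omega> / l) \<in> setprod M B {Z \<in> S. \<pi> Z = 1}}"
    if "X \<in> C" for X
  proof -
    have "ereal ` {\<pi> Z | Z. Z \<in> S \<and> (\<lambda>\<omega>. X \<omega> / Z \<omega>) \<in> B}
        = ereal ` {l | l. l > 0 \<and> (\<lambda>\<omega>. X \<omega> / l) \<in> setprod M B {Z \<in> S. \<pi> Z = 1}}"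
      using acceptable_prices_eq_scaling_levels[OF assms(10) S_pos assms(9) assms(11,12)
          C_meas[OF that] CS_K[OF that]] by (rule arg_cong)
    moreover have "{ereal (\<pi> Z) | Z. Z \<in> S \<and> (\<lambda>\<omega>. X \<omega> / Z \<omega>) \<in> B}
        = ereal ` {\<pi> Z | Z. Z \<in> S \<and> (\<lambda>\<omega>. X \<omega> / Z \<omega>) \<in> B}"
      "{ereal l | l. l > 0 \<and> (\<lambda>\<omega>. X \<omega> / l) \<in> setprod M B {Z \<in> S. \<pi> Z = 1}}
        = ereal ` {l | l. l > 0 \<and> (\<lambda>\<omega>. X \<omega> / l) \<in> setprod M B {Z \<in> S. \<pi> Z = 1}}"
      by blast+
    ultimately show ?thesis
      unfolding MARRM_def by simp
  qed
  moreover have "Y \<in> setprod M B {Z \<in> S. \<pi> Z = 1}"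
    if "X \<in> setprod M B {Z \<in> S. \<pi> Z = 1}" "Y \<in> C" "AE \<omega> in M. Y \<omega> \<le> X \<omega>" for X Y
    using setprod_downward_closed[OF assms(10) _ that(1) C_meas[OF that(2)] _ that(3)]
      S_pos CS_K[OF that(2)] by auto
  ultimately show ?thesis by blast
qed

end
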